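(* Let $E$ be an arbitrary directed graph and $U$ a compact open invariant subset of $G_E^{(0)}$. Let $\mathcal{M}$ be the set of all minimal nonempty compact open invariant subsets of $G_E^{(0)}$ contained in $U$. Then $\mathcal{M}$ is finite, its elements are pairwise disjoint, and $U=\bigsqcup_{V\in\mathcal{M}}V$.
   Context: For a directed graph $E$ (paths $\mu=\mu_1\cdots\mu_n$ with $r(\mu_i)=s(\mu_{i+1})$, $|\mu|=n$, $\mathrm{Path}(E)$ the finite paths including vertices, $E^\infty$ infinite paths, sinks = vertices emitting no edges, $\mathrm{Inf}(E)$ = vertices emitting infinitely many edges), let $X=E^\infty\cup\{\mu\in\mathrm{Path}(E): r(\mu)\text{ a sink}\}\cup\{\mu: r(\mu)\in\mathrm{Inf}(E)\}$ and $G_E=\{(\alpha x,|\alpha|-|\beta|,\beta x):\alpha,\beta\in\mathrm{Path}(E),x\in X,r(\alpha)=r(\beta)=s(x)\}$, with product $(x,k,y)(y,l,z)=(x,k+l,z)$, inverse $(y,-k,x)$, range $(x,0,x)$, source $(y,0,y)$; unit space $G_E^{(0)}=\{(x,0,x)\}\cong X$, topologized by the basis of compact open sets $Z(\mu)\setminus\bigcup_{e\in F}Z(\mu e)$ with $Z(\mu)=\{\mu x:x\in X,s(x)=r(\mu)\}$ and $F\subseteq s^{-1}(r(\mu))$ finite. $U\subseteq G_E^{(0)}$ is invariant if for every $\gamma\in G_E$, $s(\gamma)\in U$ iff $r(\gamma)\in U$. A minimal compact open invariant subset is a nonempty compact open invariant subset containing no strictly smaller nonempty compact open invariant subset. *)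

theory Defs
  imports "HOL-Analysis.Analysis"
begin

text \<open>A directed graph E is given by its vertex type 'v, its edge type 'e and the
source and range maps src rng :: 'e => 'v.  A finite path is  Fin v es : it starts at
vertex v and traverses the edge list es (length 0 paths are the vertices);
an infinite path is  Inf f  with f :: nat => 'e.\<close>

datatype ('v, 'e) gpath = Fin 'v "'e list" | Inf "nat \<Rightarrow> 'e"

fun gsrc :: "('e \<Rightarrow> 'v) \<Rightarrow> ('v, 'e) gpath \<Rightarrow> 'v" where
  "gsrc src (Fin v es) = v"
| "gsrc src (Inf f) = src (f 0)"

fun grng :: "('e \<Rightarrow> 'v) \<Rightarrow> ('v, 'e) gpath \<Rightarrow> 'v" where
  "grng rng (Fin v es) = (if es = [] then v else rng (last es))"
| "grng rng (Inf f) = undefined"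

fun glen :: "('v, 'e) gpath \<Rightarrow> nat" where
  "glen (Fin v es) = length es"
| "glen (Inf f) = 0"

definition finpaths :: "('e \<Rightarrow> 'v) \<Rightarrow> ('e \<Rightarrow> 'v) \<Rightarrow> ('v, 'e) gpath set" where
  "finpaths src rng = {Fin v es | v es.
      (es \<noteq> [] \<longrightarrow> src (hd es) = v) \<and>
      (\<forall>i. Suc i < length es \<longrightarrow> rng (es ! i) = src (es ! Suc i))}"

definition infpaths :: "('e \<Rightarrow> 'v) \<Rightarrow> ('e \<Rightarrow> 'v) \<Rightarrow> ('v, 'e) gpath set" where
  "infpaths src rng = {Inf f | f. \<forall>i. rng (f i) = src (f (Suc i))}"

definition sink :: "('e \<Rightarrow> 'v) \<Rightarrow> 'v \<Rightarrow> bool" where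
  "sink src v \<longleftrightarrow> {e. src e = v} = {}"

definition inf_emitter :: "('e \<Rightarrow> 'v) \<Rightarrow> 'v \<Rightarrow> bool" where
  "inf_emitter src v \<longleftrightarrow> infinite {e. src e = v}"

definition bpaths :: "('e \<Rightarrow> 'v) \<Rightarrow> ('e \<Rightarrow> 'v) \<Rightarrow> ('v, 'e) gpath set" where
  "bpaths src rng = infpaths src rng
     \<union> {\<mu> \<in> finpaths src rng. sink src (grng rng \<mu>)}
     \<union> {\<mu> \<in> finpaths src rng. inf_emitter src (grng rng \<mu>)}"

fun gcat :: "('v, 'e) gpath \<Rightarrow> ('v, 'e) gpath \<Rightarrow> ('v, 'e) gpath" where
  "gcat (Fin v es) (Fin w fs) = Fin v (es @ fs)"
| "gcat (Fin v es) (Inf f) = Inf (\<lambda>i. if i < length es then es ! i else f (i - length es))"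
| "gcat (Inf f) _ = Inf f"

definition graph_groupoid ::
  "('e \<Rightarrow> 'v) \<Rightarrow> ('e \<Rightarrow> 'v) \<Rightarrow> (('v, 'e) gpath \<times> int \<times> ('v, 'e) gpath) set" where
  "graph_groupoid src rng =
     {(gcat \<alpha> x, int (glen \<alpha>) - int (glen \<beta>), gcat \<beta> x) | \<alpha> \<beta> x.
        \<alpha> \<in> finpaths src rng \<and> \<beta> \<in> finpaths src rng \<and> x \<in> bpaths src rng \<and>
        grng rng \<alpha> = gsrc src x \<and> grng rng \<beta> = gsrc src x}"

definition cyl :: "('e \<Rightarrow> 'v) \<Rightarrow> ('e \<Rightarrow> 'v) \<Rightarrow> ('v, 'e) gpath \<Rightarrow> ('v, 'e) gpath set" where
  "cyl src rng \<mu> = {gcat \<mu> x | x. x \<in> bpaths src rng \<and> gsrc src x = grng rng \<mu>}"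

fun gsnoc :: "('v, 'e) gpath \<Rightarrow> 'e \<Rightarrow> ('v, 'e) gpath" where
  "gsnoc (Fin v es) e = Fin v (es @ [e])"
| "gsnoc (Inf f) e = Inf f"

definition basis_sets :: "('e \<Rightarrow> 'v) \<Rightarrow> ('e \<Rightarrow> 'v) \<Rightarrow> ('v, 'e) gpath set set" where
  "basis_sets src rng =
     {cyl src rng \<mu> - (\<Union>e\<in>F. cyl src rng (gsnoc \<mu> e)) | \<mu> F.
        \<mu> \<in> finpaths src rng \<and> finite F \<and> F \<subseteq> {e. src e = grng rng \<mu>}}"

text \<open>The topology on the unit space G_E^(0), identified with X.\<close>
definition unit_top :: "('e \<Rightarrow> 'v) \<Rightarrow> ('e \<Rightarrow> 'v) \<Rightarrow> ('v, 'e) gpath topology" where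
  "unit_top src rng = topology_generated_by (basis_sets src rng)"

text \<open>Invariant subsets of the unit space (units (x,0,x) identified with x).\<close>
definition invariant :: "('e \<Rightarrow> 'v) \<Rightarrow> ('e \<Rightarrow> 'v) \<Rightarrow> ('v, 'e) gpath set \<Rightarrow> bool" where
  "invariant src rng U \<longleftrightarrow> U \<subseteq> bpaths src rng \<and>
     (\<forall>(x, k, y) \<in> graph_groupoid src rng. y \<in> U \<longleftrightarrow> x \<in> U)"

definition compact_open_invariant ::
  "('e \<Rightarrow> 'v) \<Rightarrow> ('e \<Rightarrow> 'v) \<Rightarrow> ('v, 'e) gpath set \<Rightarrow> bool" where
  "compact_open_invariant src rng U \<longleftrightarrow>
     compactin (unit_top src rng) U \<and> openin (unit_top src rng) U \<and> invariant src rng U"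

definition minimal_coi ::
  "('e \<Rightarrow> 'v) \<Rightarrow> ('e \<Rightarrow> 'v) \<Rightarrow> ('v, 'e) gpath set \<Rightarrow> bool" where
  "minimal_coi src rng V \<longleftrightarrow> V \<noteq> {} \<and> compact_open_invariant src rng V \<and>
     (\<forall>W. W \<noteq> {} \<and> W \<subseteq> V \<and> compact_open_invariant src rng W \<longrightarrow> W = V)"

end

theory Submission
  imports Defs
begin

text \<open>The boundary path space is Hausdorff, so compact open sets are closed and the compact open
  invariant subsets of \<open>U\<close> form a family closed under differences. This family is finite:
  by compactness \<open>U\<close> meets only finitely many vertex cylinders \<open>Z(v)\<close>, and an open invariant set
  \<open>W\<close> is determined by the vertices \<open>v\<close> it contains and the cylinders \<open>Z(v)\<close> it contains.
  Indeed each point of \<open>W\<close> is a finite path followed by a tail lying in \<open>W\<close> (by invariance),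
  and the tail can be chosen to be either a vertex or, when the point is an infinite path, to
  lie in a cylinder \<open>Z(v) \<subseteq> W\<close> (by openness). Finally, in any finite family of subsets of \<open>U\<close>
  that contains \<open>U\<close> and is closed under differences, the minimal nonempty members partition \<open>U\<close>.\<close>

section \<open>Finite families of sets closed under differences\<close>

lemma finite_Diff_closed_atoms_partition:
  fixes B :: "'a set set"
  assumes fin: "finite B" and U: "U \<in> B" and sub: "\<And>W. W \<in> B \<Longrightarrow> W \<subseteq> U"
    and Diff: "\<And>V W. V \<in> B \<Longrightarrow> W \<in> B \<Longrightarrow> V - W \<in> B"
  defines "A \<equiv> {V \<in> B. V \<noteq> {} \<and> (\<forall>W\<in>B. W \<noteq> {} \<and> W \<subseteq> V \<longrightarrow> W = V)}"
  shows "pairwise disjnt A \<and> U = \<Union>A"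
proof -
  have atom: "V \<in> B" "V \<noteq> {}" "\<And>W. W \<in> B \<Longrightarrow> W \<noteq> {} \<Longrightarrow> W \<subseteq> V \<Longrightarrow> W = V" if "V \<in> A" for V
    using that unfolding A_def by blast+
  have disj: "disjnt V1 V2" if V1: "V1 \<in> A" and V2: "V2 \<in> A" and ne: "V1 \<noteq> V2" for V1 V2
  proof (cases "V1 - V2 = {}")
    case True
    then show ?thesis using atom(3)[OF V2 atom(1,2)[OF V1]] ne by blast
  next
    case False
    then have "V1 - V2 = V1" using atom(3)[OF V1 Diff[OF atom(1)[OF V1] atom(1)[OF V2]]] by blast
    then show ?thesis unfolding disjnt_def by blast
  qed
  have cover: "x \<in> \<Union>A" if x: "x \<in> U" for x
  proof -
    obtain V where V: "V \<in> B" "x \<in> V" and min: "\<And>W. W \<in> B \<Longrightarrow> x \<in> W \<Longrightarrow> W \<subseteq> V \<Longrightarrow> V = W"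
      using finite_has_minimal[of "{W \<in> B. x \<in> W}"] fin U x by force
    \<comment> \<open>A nonempty W in B below V cannot miss x, for then V - W would undercut V.\<close>
    have "W = V" if W: "W \<in> B" "W \<noteq> {}" "W \<subseteq> V" for W
    proof (cases "x \<in> W")
      case True
      then show ?thesis using min W by metis
    next
      case False
      then have "V = V - W" using min[OF Diff[OF V(1) W(1)]] V(2) by blast
      then show ?thesis using W by blast
    qed
    then show ?thesis using V unfolding A_def by blast
  qed
  have "\<Union>A \<subseteq> U" using sub unfolding A_def by blast
  then have "U = \<Union>A" using cover by blast
  moreover have "pairwise disjnt A" using disj by (simp add: pairwise_def)
  ultimately show ?thesis by blast
qed

section \<open>Paths and cylinder sets\<close>

fun edge_at :: "('v, 'e) gpath \<Rightarrow> nat \<Rightarrow> 'e option" where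
  "edge_at (Fin v es) i = (if i < length es then Some (es ! i) else None)"
| "edge_at (Inf f) i = Some (f i)"

lemma edge_at_gcat:
  "edge_at (gcat (Fin v es) x) i = (if i < length es then Some (es ! i) else edge_at x (i - length es))"
  by (cases x) (auto simp: nth_append)

lemma edge_at_None_mono: "edge_at p j = None \<Longrightarrow> j \<le> k \<Longrightarrow> edge_at p k = None"
  by (cases p) (auto split: if_splits)

lemma finpaths_Fin_iff: "Fin v es \<in> finpaths src rng \<longleftrightarrow>
   (es \<noteq> [] \<longrightarrow> src (hd es) = v) \<and> (\<forall>i. Suc i < length es \<longrightarrow> rng (es ! i) = src (es ! Suc i))"
  by (simp add: finpaths_def)

lemma finpaths_Inf [simp]: "Inf f \<notin> finpaths src rng"
  by (simp add: finpaths_def)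

lemma finpaths_vertex [simp]: "Fin v [] \<in> finpaths src rng"
  by (simp add: finpaths_Fin_iff)

lemma bpaths_Fin_iff: "Fin v es \<in> bpaths src rng \<longleftrightarrow> Fin v es \<in> finpaths src rng \<and>
   (sink src (grng rng (Fin v es)) \<or> inf_emitter src (grng rng (Fin v es)))"
  by (auto simp: bpaths_def infpaths_def)

lemma bpaths_Inf_iff: "Inf f \<in> bpaths src rng \<longleftrightarrow> (\<forall>i. rng (f i) = src (f (Suc i)))"
  by (auto simp: bpaths_def infpaths_def)

lemma last_eq_nth_Suc: "Suc i = length es \<Longrightarrow> last es = es ! i"
  by (metis diff_Suc_1 last_conv_nth list.size(3) nat.distinct(1))

lemma finpaths_append:
  assumes "Fin v es \<in> finpaths src rng" and "Fin w fs \<in> finpaths src rng"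
    and "grng rng (Fin v es) = w"
  shows "Fin v (es @ fs) \<in> finpaths src rng"
proof -
  have es: "es \<noteq> [] \<longrightarrow> src (hd es) = v" "\<forall>i. Suc i < length es \<longrightarrow> rng (es ! i) = src (es ! Suc i)"
    and fs: "fs \<noteq> [] \<longrightarrow> src (hd fs) = w" "\<forall>i. Suc i < length fs \<longrightarrow> rng (fs ! i) = src (fs ! Suc i)"
    using assms(1,2) by (auto simp: finpaths_Fin_iff)
  have "rng ((es @ fs) ! i) = src ((es @ fs) ! Suc i)" if i: "Suc i < length (es @ fs)" for i
  proof -
    consider "Suc i < length es" | "Suc i = length es" | "length es \<le> i" by linarith
    then show ?thesis
    proof cases
      case 1
      then show ?thesis using es by (simp add: nth_append)
    next
      case 2
      then have "fs \<noteq> []" "es \<noteq> []" "last es = es ! i" using i by (auto simp: last_eq_nth_Suc)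
      then show ?thesis using 2 fs assms(3) by (auto simp: nth_append hd_conv_nth)
    next
      case 3
      then show ?thesis using i fs(2)[rule_format, of "i - length es"] by (simp add: nth_append Suc_diff_le)
    qed
  qed
  moreover have "es @ fs \<noteq> [] \<longrightarrow> src (hd (es @ fs)) = v"
    using es fs assms(3) by (cases es) auto
  ultimately show ?thesis by (simp add: finpaths_Fin_iff)
qed

lemma finpaths_snoc:
  assumes "Fin v es \<in> finpaths src rng" "src e = grng rng (Fin v es)"
  shows "Fin v (es @ [e]) \<in> finpaths src rng"
  using finpaths_append[OF assms(1), of "src e" "[e]"] assms(2) by (simp add: finpaths_Fin_iff)

lemma src_snoc_finpaths:
  assumes "Fin v (es @ [e]) \<in> finpaths src rng"
  shows "src e = grng rng (Fin v es)"
proof (cases "es = []")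
  case True
  then show ?thesis using assms by (simp add: finpaths_Fin_iff)
next
  case False
  then have "Suc (length es - 1) < length (es @ [e])" "Suc (length es - 1) = length es" by simp_all
  then show ?thesis using assms False unfolding finpaths_Fin_iff
    by (metis last_eq_nth_Suc grng.simps(1) lessI nth_append_length nth_append)
qed

lemma bpaths_gcat:
  assumes mu: "mu \<in> finpaths src rng" and x: "x \<in> bpaths src rng"
    and eq: "grng rng mu = gsrc src x"
  shows "gcat mu x \<in> bpaths src rng \<and> gsrc src (gcat mu x) = gsrc src mu"
proof -
  obtain v es where m: "mu = Fin v es" using mu by (cases mu) auto
  have es: "es \<noteq> [] \<longrightarrow> src (hd es) = v" "\<forall>i. Suc i < length es \<longrightarrow> rng (es ! i) = src (es ! Suc i)"
    using mu m by (auto simp: finpaths_Fin_iff)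
  show ?thesis
  proof (cases x)
    case (Fin w fs)
    have "grng rng (Fin v (es @ fs)) = grng rng (Fin w fs)"
      using eq m Fin by auto
    then show ?thesis using finpaths_append[of v es src rng w fs] x mu m eq Fin
      by (auto simp: bpaths_Fin_iff)
  next
    case (Inf f)
    have f: "\<forall>i. rng (f i) = src (f (Suc i))" using x Inf by (simp add: bpaths_Inf_iff)
    let ?g = "\<lambda>i. if i < length es then es ! i else f (i - length es)"
    have "rng (?g i) = src (?g (Suc i))" for i
    proof -
      consider "Suc i < length es" | "Suc i = length es" | "length es \<le> i" by linarith
      then show ?thesis
      proof cases
        case 1
        then show ?thesis using es by simp
      next
        case 2
        then have "es \<noteq> []" "last es = es ! i" by (auto simp: last_eq_nth_Suc)
        then show ?thesis using 2 eq m Inf by auto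
      next
        case 3
        then show ?thesis using f[rule_format, of "i - length es"] by (simp add: Suc_diff_le)
      qed
    qed
    moreover have "src (?g 0) = v" using es eq m Inf by (cases es) auto
    ultimately show ?thesis using m Inf by (simp add: bpaths_Inf_iff)
  qed
qed

lemma bpaths_Inf_split:
  assumes p: "Inf g \<in> bpaths src rng" and s: "src (g 0) = v"
    and pre: "\<forall>i<length es. g i = es ! i"
  shows "\<exists>x. x \<in> bpaths src rng \<and> gsrc src x = grng rng (Fin v es) \<and> Inf g = gcat (Fin v es) x"
proof -
  have g: "\<forall>i. rng (g i) = src (g (Suc i))" using p by (simp add: bpaths_Inf_iff)
  let ?x = "Inf (\<lambda>i. g (i + length es))"
  have "gsrc src ?x = grng rng (Fin v es)"
  proof (cases "es = []")
    case False
    then have "g (length es - 1) = last es" using pre by (simp add: last_conv_nth)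
    then show ?thesis using False g[rule_format, of "length es - 1"] by simp
  qed (use s in simp)
  moreover have "?x \<in> bpaths src rng" using g by (simp add: bpaths_Inf_iff)
  moreover have "Inf g = gcat (Fin v es) ?x" using pre by (simp add: fun_eq_iff)
  ultimately show ?thesis by blast
qed

lemma bpaths_Fin_split:
  assumes mu: "Fin v es \<in> finpaths src rng" and p: "Fin v (es @ ds) \<in> bpaths src rng"
  shows "Fin (grng rng (Fin v es)) ds \<in> bpaths src rng"
proof -
  let ?fs = "es @ ds" and ?x = "Fin (grng rng (Fin v es)) ds"
  have fs: "?fs \<noteq> [] \<longrightarrow> src (hd ?fs) = v" "\<forall>i. Suc i < length ?fs \<longrightarrow> rng (?fs ! i) = src (?fs ! Suc i)"
      "sink src (grng rng (Fin v ?fs)) \<or> inf_emitter src (grng rng (Fin v ?fs))"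
    using p by (auto simp: bpaths_Fin_iff finpaths_Fin_iff)
  have "?x \<in> finpaths src rng"
    unfolding finpaths_Fin_iff
  proof (intro conjI allI impI)
    assume "ds \<noteq> []"
    then show "src (hd ds) = grng rng (Fin v es)"
    proof (cases "es = []")
      case False
      then have "rng (?fs ! (length es - 1)) = src (?fs ! length es)"
        using fs(2)[rule_format, of "length es - 1"] \<open>ds \<noteq> []\<close> by simp
      then show ?thesis using False \<open>ds \<noteq> []\<close> by (simp add: nth_append last_conv_nth hd_conv_nth)
    qed (use fs(1) in simp)
  next
    fix i assume "Suc i < length ds"
    then show "rng (ds ! i) = src (ds ! Suc i)"
      using fs(2)[rule_format, of "length es + i"] by (simp add: nth_append)
  qed
  moreover have "grng rng ?x = grng rng (Fin v ?fs)" by simp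
  ultimately show ?thesis using fs(3) by (simp only: bpaths_Fin_iff)
qed

lemma bpaths_split:
  assumes mu: "mu \<in> finpaths src rng" and p: "p \<in> bpaths src rng"
    and s: "gsrc src p = gsrc src mu" and a: "\<forall>i<glen mu. edge_at p i = edge_at mu i"
  shows "\<exists>x. x \<in> bpaths src rng \<and> gsrc src x = grng rng mu \<and> p = gcat mu x"
proof -
  obtain v es where m: "mu = Fin v es" using mu by (cases mu) auto
  show ?thesis
  proof (cases p)
    case (Fin w fs)
    have len: "length es \<le> length fs"
    proof (rule ccontr)
      assume "\<not> length es \<le> length fs"
      then show False using a[rule_format, of "length fs"] Fin m by simp
    qed
    have "fs = es @ drop (length es) fs"
    proof (rule nth_equalityI)
      fix i assume "i < length fs"
      then show "fs ! i = (es @ drop (length es) fs) ! i"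
        using a[rule_format, of i] Fin m len by (auto simp: nth_append)
    qed (use len in simp)
    then show ?thesis
      using bpaths_Fin_split[of v es src rng "drop (length es) fs"] mu p Fin m s
      by (intro exI[of _ "Fin (grng rng (Fin v es)) (drop (length es) fs)"]) (auto simp del: grng.simps)
  next
    case (Inf g)
    have "\<forall>i<length es. g i = es ! i" using a Inf m by auto
    then show ?thesis using bpaths_Inf_split[of g src rng v es] p Inf m s by simp
  qed
qed

lemma cyl_eq:
  assumes mu: "mu \<in> finpaths src rng"
  shows "cyl src rng mu =
    {p \<in> bpaths src rng. gsrc src p = gsrc src mu \<and> (\<forall>i<glen mu. edge_at p i = edge_at mu i)}"
proof (intro set_eqI iffI)
  obtain v es where m: "mu = Fin v es" using mu by (cases mu) auto
  fix p assume "p \<in> cyl src rng mu"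
  then obtain x where "p = gcat mu x" "x \<in> bpaths src rng" "gsrc src x = grng rng mu"
    unfolding cyl_def by auto
  then show "p \<in> {p \<in> bpaths src rng. gsrc src p = gsrc src mu \<and> (\<forall>i<glen mu. edge_at p i = edge_at mu i)}"
    using bpaths_gcat[OF mu] m by (auto simp: edge_at_gcat)
next
  fix p assume "p \<in> {p \<in> bpaths src rng. gsrc src p = gsrc src mu \<and> (\<forall>i<glen mu. edge_at p i = edge_at mu i)}"
  then show "p \<in> cyl src rng mu" using bpaths_split[OF mu, of p] unfolding cyl_def by auto
qed

lemma cyl_vertex: "cyl src rng (Fin v []) = {p \<in> bpaths src rng. gsrc src p = v}"
  by (simp add: cyl_eq)

section \<open>The topology of the boundary path space\<close>

lemma openin_basis_sets: "B \<in> basis_sets src rng \<Longrightarrow> openin (unit_top src rng) B"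
  unfolding unit_top_def by (rule topology_generated_by_Basis)

lemma openin_cyl: "mu \<in> finpaths src rng \<Longrightarrow> openin (unit_top src rng) (cyl src rng mu)"
  by (rule openin_basis_sets) (force simp: basis_sets_def)

lemma topspace_unit_top_subset: "topspace (unit_top src rng) \<subseteq> bpaths src rng"
proof -
  have "B \<subseteq> bpaths src rng" if "B \<in> basis_sets src rng" for B
    using that by (auto simp: basis_sets_def cyl_eq)
  then show ?thesis unfolding unit_top_def by auto
qed

definition gprefix :: "('e \<Rightarrow> 'v) \<Rightarrow> ('v, 'e) gpath \<Rightarrow> nat \<Rightarrow> ('v, 'e) gpath" where
  "gprefix src p n = Fin (gsrc src p) (map (\<lambda>j. the (edge_at p j)) [0..<n])"

lemma edge_at_gprefix: "edge_at (gprefix src p n) i = (if i < n then Some (the (edge_at p i)) else None)"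
  by (simp add: gprefix_def)

lemma gsrc_gprefix [simp]: "gsrc src (gprefix src p n) = gsrc src p"
  by (simp add: gprefix_def)

lemma glen_gprefix [simp]: "glen (gprefix src p n) = n"
  by (simp add: gprefix_def)

lemma gprefix_Suc: "gprefix src p (Suc n) = gsnoc (gprefix src p n) (the (edge_at p n))"
  by (simp add: gprefix_def)

lemma gprefix_finpaths:
  assumes p: "p \<in> bpaths src rng" and n: "\<forall>j<n. edge_at p j \<noteq> None"
  shows "gprefix src p n \<in> finpaths src rng"
proof (cases p)
  case (Fin v es)
  have "n \<le> length es"
    using n[rule_format, of "length es"] Fin by (cases "length es < n") auto
  then have "map (\<lambda>j. the (edge_at p j)) [0..<n] = take n es"
    by (intro nth_equalityI) (use Fin in auto)
  then show ?thesis
    using p Fin \<open>n \<le> length es\<close> by (auto simp: gprefix_def bpaths_Fin_iff finpaths_Fin_iff hd_conv_nth)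
next
  case (Inf f)
  then show ?thesis using p by (auto simp: gprefix_def finpaths_Fin_iff bpaths_Inf_iff hd_conv_nth)
qed

lemma mem_cyl_gprefix:
  assumes "p \<in> bpaths src rng" and "\<forall>j<n. edge_at p j \<noteq> None"
  shows "p \<in> cyl src rng (gprefix src p n)"
  using assms gprefix_finpaths[OF assms] by (auto simp: cyl_eq edge_at_gprefix)

lemma gpath_eqI:
  assumes "gsrc src p = gsrc src q" and "edge_at p = edge_at q"
  shows "p = q"
proof (cases p; cases q)
  fix v es w fs assume p: "p = Fin v es" and q: "q = Fin w fs"
  have "length es = length fs"
    using fun_cong[OF assms(2), of "length es"] fun_cong[OF assms(2), of "length fs"] p q
    by (auto split: if_splits)
  moreover have "es ! i = fs ! i" if "i < length es" for i
    using fun_cong[OF assms(2), of i] p q that calculation by auto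
  ultimately show "p = q" using assms(1) p q by (simp add: nth_equalityI)
next
  fix v es g assume "p = Fin v es" "q = Inf g"
  then show "p = q" using fun_cong[OF assms(2), of "length es"] by simp
next
  fix f w fs assume "p = Inf f" "q = Fin w fs"
  then show "p = q" using fun_cong[OF assms(2), of "length fs"] by simp
next
  fix f g assume "p = Inf f" "q = Inf g"
  then show "p = q" using assms(2) by (simp add: fun_eq_iff)
qed

lemma separate_stopping_path:
  assumes x: "x \<in> bpaths src rng" and y: "y \<in> bpaths src rng"
    and s: "gsrc src x = gsrc src y" and agree: "\<forall>j<i. edge_at x j = edge_at y j"
    and nn: "\<forall>j<i. edge_at x j \<noteq> None"
    and xi: "edge_at x i = None" and yi: "edge_at y i = Some b"
  shows "\<exists>A B. openin (unit_top src rng) A \<and> openin (unit_top src rng) B \<and> x \<in> A \<and> y \<in> B \<and> disjnt A B"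
proof -
  let ?mu = "gprefix src x i"
  have nny: "\<forall>j<Suc i. edge_at y j \<noteq> None" using agree nn yi by (auto simp: less_Suc_eq)
  have mu: "?mu \<in> finpaths src rng" by (rule gprefix_finpaths[OF x nn])
  have "gprefix src y i = ?mu" using s agree unfolding gprefix_def by simp
  then have snoc: "gprefix src y (Suc i) = gsnoc ?mu b" using yi by (simp add: gprefix_Suc)
  have mub: "gsnoc ?mu b \<in> finpaths src rng"
    using gprefix_finpaths[OF y nny] snoc by simp
  have "src b = grng rng ?mu"
    using mub src_snoc_finpaths by (metis gprefix_def gsnoc.simps(1))
  then have "cyl src rng ?mu - cyl src rng (gsnoc ?mu b) \<in> basis_sets src rng"
    unfolding basis_sets_def using mu by (intro CollectI exI[of _ ?mu] exI[of _ "{b}"]) simp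
  moreover have "x \<notin> cyl src rng (gsnoc ?mu b)"
  proof
    assume "x \<in> cyl src rng (gsnoc ?mu b)"
    then have "edge_at x i = edge_at (gsnoc ?mu b) i" using mub by (simp add: cyl_eq gprefix_def)
    then show False using xi by (simp add: gprefix_def)
  qed
  then have "x \<in> cyl src rng ?mu - cyl src rng (gsnoc ?mu b)"
    using mem_cyl_gprefix[OF x nn] by simp
  moreover have "y \<in> cyl src rng (gsnoc ?mu b)"
    using mem_cyl_gprefix[OF y nny] snoc by simp
  ultimately show ?thesis using mub
    by (intro exI[of _ "cyl src rng ?mu - cyl src rng (gsnoc ?mu b)"] exI[of _ "cyl src rng (gsnoc ?mu b)"])
      (auto simp: openin_basis_sets openin_cyl disjnt_def)
qed

lemma separate_branching_paths:
  assumes x: "x \<in> bpaths src rng" and y: "y \<in> bpaths src rng"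
    and nx: "\<forall>j<Suc i. edge_at x j \<noteq> None" and ny: "\<forall>j<Suc i. edge_at y j \<noteq> None"
    and xy: "edge_at x i \<noteq> edge_at y i"
  shows "\<exists>A B. openin (unit_top src rng) A \<and> openin (unit_top src rng) B \<and> x \<in> A \<and> y \<in> B \<and> disjnt A B"
proof -
  let ?A = "cyl src rng (gprefix src x (Suc i))" and ?B = "cyl src rng (gprefix src y (Suc i))"
  note fx = gprefix_finpaths[OF x nx] and fy = gprefix_finpaths[OF y ny]
  have "edge_at z i = edge_at x i" if "z \<in> ?A" for z
    using that fx nx by (auto simp: cyl_eq edge_at_gprefix)
  moreover have "edge_at z i = edge_at y i" if "z \<in> ?B" for z
    using that fy ny by (auto simp: cyl_eq edge_at_gprefix)
  ultimately have "disjnt ?A ?B" using xy unfolding disjnt_iff by metis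
  then show ?thesis using fx fy mem_cyl_gprefix[OF x nx] mem_cyl_gprefix[OF y ny]
    by (intro exI[of _ ?A] exI[of _ ?B]) (simp add: openin_cyl)
qed

lemma Hausdorff_unit_top: "Hausdorff_space (unit_top src rng)"
  unfolding Hausdorff_space_def
proof (intro allI impI)
  fix x y assume "x \<in> topspace (unit_top src rng) \<and> y \<in> topspace (unit_top src rng) \<and> x \<noteq> y"
  then have x: "x \<in> bpaths src rng" and y: "y \<in> bpaths src rng" and "x \<noteq> y"
    using topspace_unit_top_subset by blast+
  show "\<exists>A B. openin (unit_top src rng) A \<and> openin (unit_top src rng) B \<and> x \<in> A \<and> y \<in> B \<and> disjnt A B"
  proof (cases "gsrc src x = gsrc src y")
    case False
    let ?A = "cyl src rng (Fin (gsrc src x) [])" and ?B = "cyl src rng (Fin (gsrc src y) [])"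
    have "openin (unit_top src rng) ?A" "openin (unit_top src rng) ?B" by (simp_all add: openin_cyl)
    moreover have "x \<in> ?A" "y \<in> ?B" "disjnt ?A ?B"
      using x y False by (auto simp: cyl_vertex disjnt_def)
    ultimately show ?thesis by blast
  next
    case True
    then have "\<exists>i. edge_at x i \<noteq> edge_at y i" using gpath_eqI \<open>x \<noteq> y\<close> by blast
    define i where "i = (LEAST i. edge_at x i \<noteq> edge_at y i)"
    have di: "edge_at x i \<noteq> edge_at y i"
      unfolding i_def by (rule LeastI_ex) fact
    have agree: "\<forall>j<i. edge_at x j = edge_at y j" unfolding i_def using not_less_Least by blast
    \<comment> \<open>The paths cannot both stop before the first index where they differ.\<close>
    have nn: "\<forall>j<i. edge_at x j \<noteq> None"
      using agree di edge_at_None_mono[of x _ i] edge_at_None_mono[of y _ i]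
      by (metis less_imp_le_nat)
    then have nny: "\<forall>j<i. edge_at y j \<noteq> None" using agree by simp
    show ?thesis
    proof (cases "edge_at x i")
      case None
      then obtain b where "edge_at y i = Some b" using di by (cases "edge_at y i") auto
      then show ?thesis using separate_stopping_path[OF x y True agree nn None] by blast
    next
      case (Some a)
      show ?thesis
      proof (cases "edge_at y i")
        case None
        have "\<forall>j<i. edge_at y j = edge_at x j" using agree by simp
        then show ?thesis
          using separate_stopping_path[OF y x True[symmetric] _ nny None Some] disjnt_sym by blast
      next
        case (Some b)
        then show ?thesis using separate_branching_paths[OF x y _ _ di] nn nny \<open>edge_at x i = Some a\<close>
          by (simp add: less_Suc_eq)
      qed
    qed
  qed
qed

lemma generate_topology_on_Inf_cyl:
  assumes "generate_topology_on (basis_sets src rng) W"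
  shows "\<forall>f. Inf f \<in> W \<longrightarrow> Inf f \<in> bpaths src rng \<longrightarrow>
           (\<exists>n. \<forall>m\<ge>n. cyl src rng (gprefix src (Inf f) m) \<subseteq> W)"
  using assms
proof (induction rule: generate_topology_on.induct)
  case (Int a b)
  show ?case
  proof (intro allI impI)
    fix f assume "Inf f \<in> a \<inter> b" "Inf f \<in> bpaths src rng"
    then obtain n1 n2 where "\<forall>m\<ge>n1. cyl src rng (gprefix src (Inf f) m) \<subseteq> a"
      and "\<forall>m\<ge>n2. cyl src rng (gprefix src (Inf f) m) \<subseteq> b"
      using Int.IH by (meson IntD1 IntD2)
    then show "\<exists>n. \<forall>m\<ge>n. cyl src rng (gprefix src (Inf f) m) \<subseteq> a \<inter> b"
      by (intro exI[of _ "max n1 n2"]) auto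
  qed
next
  case (UN K)
  show ?case
  proof (intro allI impI)
    fix f assume "Inf f \<in> \<Union>K" "Inf f \<in> bpaths src rng"
    then obtain k n where "k \<in> K" "\<forall>m\<ge>n. cyl src rng (gprefix src (Inf f) m) \<subseteq> k"
      using UN.IH by blast
    then show "\<exists>n. \<forall>m\<ge>n. cyl src rng (gprefix src (Inf f) m) \<subseteq> \<Union>K" by blast
  qed
next
  case (Basis s)
  then obtain mu F where s: "s = cyl src rng mu - (\<Union>e\<in>F. cyl src rng (gsnoc mu e))"
    and mu: "mu \<in> finpaths src rng" and F: "F \<subseteq> {e. src e = grng rng mu}"
    unfolding basis_sets_def by blast
  obtain v es where m: "mu = Fin v es" using mu by (cases mu) auto
  show ?case
  proof (intro allI impI)
    fix f assume fs: "Inf f \<in> s" and fb: "Inf f \<in> bpaths src rng"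
    let ?k = "length es"
    have f0: "src (f 0) = v" and fe: "\<forall>i<?k. f i = es ! i"
      using fs s mu m by (auto simp: cyl_eq)
    have "map f [0..<?k] = es" by (rule nth_equalityI) (use fe in simp_all)
    then have "gprefix src (Inf f) (Suc ?k) = gsnoc mu (f ?k)" using m f0 by (simp add: gprefix_def)
    then have fkF: "f ?k \<notin> F" using fs s mem_cyl_gprefix[OF fb, of "Suc ?k"] by auto
    have "cyl src rng (gprefix src (Inf f) m') \<subseteq> s" if m': "Suc ?k \<le> m'" for m'
    proof
      fix z assume "z \<in> cyl src rng (gprefix src (Inf f) m')"
      then have z: "z \<in> bpaths src rng" "gsrc src z = v" "\<forall>i<m'. edge_at z i = Some (f i)"
        using gprefix_finpaths[OF fb, of m'] f0 by (auto simp: cyl_eq edge_at_gprefix)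
      have "z \<notin> cyl src rng (gsnoc mu e)" if e: "e \<in> F" for e
      proof
        assume "z \<in> cyl src rng (gsnoc mu e)"
        moreover have "gsnoc mu e \<in> finpaths src rng" using finpaths_snoc[of v es src rng e] mu m F e by auto
        ultimately have "edge_at z ?k = Some e" using m by (simp add: cyl_eq)
        then show False using z(3) m' fkF e by simp
      qed
      moreover have "z \<in> cyl src rng mu" using z m' fe mu m by (auto simp: cyl_eq)
      ultimately show "z \<in> s" using s by blast
    qed
    then show "\<exists>n. \<forall>m\<ge>n. cyl src rng (gprefix src (Inf f) m) \<subseteq> s" by blast
  qed
qed simp

lemma openin_Inf_cyl_subset:
  assumes "openin (unit_top src rng) W" "Inf f \<in> W"
  obtains n where "cyl src rng (gprefix src (Inf f) n) \<subseteq> W"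
proof -
  have "generate_topology_on (basis_sets src rng) W"
    using assms(1) unfolding unit_top_def by (simp add: openin_topology_generated_by_iff)
  moreover have "Inf f \<in> bpaths src rng"
    using assms openin_subset topspace_unit_top_subset by blast
  ultimately show ?thesis
    using generate_topology_on_Inf_cyl assms(2) that by (meson order_refl)
qed

section \<open>Compact open invariant sets\<close>

lemma invariant_gcat_iff:
  assumes W: "invariant src rng W" and mu: "mu \<in> finpaths src rng" and z: "z \<in> bpaths src rng"
    and r: "grng rng mu = gsrc src z"
  shows "gcat mu z \<in> W \<longleftrightarrow> z \<in> W"
proof -
  let ?v = "Fin (gsrc src z) []"
  have "gcat ?v z = z" by (cases z) auto
  moreover have "(gcat mu z, int (glen mu) - int (glen ?v), gcat ?v z) \<in> graph_groupoid src rng"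
    unfolding graph_groupoid_def using mu z r by (intro CollectI exI[of _ mu] exI[of _ ?v] exI[of _ z]) simp
  ultimately show ?thesis using W unfolding invariant_def by fastforce
qed

lemma compact_open_invariant_Diff:
  assumes A: "compact_open_invariant src rng A" and B: "compact_open_invariant src rng B"
  shows "compact_open_invariant src rng (A - B)"
proof -
  have "closedin (unit_top src rng) A" "closedin (unit_top src rng) B"
    using A B compactin_imp_closedin[OF Hausdorff_unit_top]
    unfolding compact_open_invariant_def by blast+
  moreover have "compactin (unit_top src rng) A" "openin (unit_top src rng) A" "openin (unit_top src rng) B"
    using A B unfolding compact_open_invariant_def by blast+
  ultimately have "compactin (unit_top src rng) (A - B)" "openin (unit_top src rng) (A - B)"
    using closed_compactin[of "unit_top src rng" A "A - B"] by auto
  moreover have "invariant src rng (A - B)"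
    using A B unfolding compact_open_invariant_def invariant_def by blast
  ultimately show ?thesis unfolding compact_open_invariant_def by blast
qed

lemma finite_gsrc_compactin:
  assumes "compactin (unit_top src rng) U"
  shows "finite (gsrc src ` U)"
proof -
  let ?C = "range (\<lambda>v. cyl src rng (Fin v []))"
  have U: "U \<subseteq> bpaths src rng"
    using compactin_subset_topspace[OF assms] topspace_unit_top_subset by blast
  then have "U \<subseteq> \<Union>?C" by (auto simp: cyl_vertex)
  moreover have "\<forall>C\<in>?C. openin (unit_top src rng) C" by (auto simp: openin_cyl)
  ultimately obtain F where F: "finite F" "F \<subseteq> ?C" "U \<subseteq> \<Union>F"
    using assms unfolding compactin_def by blast
  then obtain V where "finite V" "F = (\<lambda>v. cyl src rng (Fin v [])) ` V"
    by (meson finite_subset_image)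
  moreover have "gsrc src ` U \<subseteq> V" using F(3) U calculation(2) by (auto simp: cyl_vertex)
  ultimately show ?thesis using finite_subset by blast
qed

lemma invariant_open_tail:
  assumes W: "invariant src rng W" "openin (unit_top src rng) W" and x: "x \<in> W"
  obtains mu t where "mu \<in> finpaths src rng" "t \<in> bpaths src rng" "grng rng mu = gsrc src t"
    "x = gcat mu t" "t = Fin (gsrc src t) [] \<or> cyl src rng (Fin (gsrc src t) []) \<subseteq> W"
proof (cases x)
  case (Fin v es)
  have "x \<in> bpaths src rng" using W x by (auto simp: invariant_def)
  then have "x \<in> finpaths src rng" "Fin (grng rng x) [] \<in> bpaths src rng"
    using Fin by (auto simp: bpaths_Fin_iff)
  then show ?thesis using that[of x "Fin (grng rng x) []"] Fin by simp
next
  case (Inf f)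
  then obtain n where n: "cyl src rng (gprefix src x n) \<subseteq> W"
    using openin_Inf_cyl_subset[OF W(2)] x by metis
  let ?mu = "gprefix src x n"
  have xb: "x \<in> bpaths src rng" using W x by (auto simp: invariant_def)
  then have mu: "?mu \<in> finpaths src rng" by (intro gprefix_finpaths) (use Inf in simp_all)
  obtain t where t: "x = gcat ?mu t" "t \<in> bpaths src rng" "gsrc src t = grng rng ?mu"
    using mem_cyl_gprefix[of x src rng n] xb Inf unfolding cyl_def by auto
  have "z \<in> W" if "z \<in> cyl src rng (Fin (gsrc src t) [])" for z
  proof -
    have "z \<in> bpaths src rng" "gsrc src z = grng rng ?mu" using that t by (auto simp: cyl_vertex)
    moreover from this have "gcat ?mu z \<in> W" using n unfolding cyl_def by auto
    ultimately show ?thesis using invariant_gcat_iff[OF W(1) mu] by simp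
  qed
  then show ?thesis using that[OF mu t(2) t(3)[symmetric] t(1)] by blast
qed

definition vertex_signature ::
  "('e \<Rightarrow> 'v) \<Rightarrow> ('e \<Rightarrow> 'v) \<Rightarrow> 'v set \<Rightarrow> ('v, 'e) gpath set \<Rightarrow> 'v set \<times> 'v set" where
  "vertex_signature src rng S W = ({v \<in> S. cyl src rng (Fin v []) \<subseteq> W}, {v \<in> S. Fin v [] \<in> W})"

lemma subset_if_vertex_signature_eq:
  assumes W1: "invariant src rng W1" "openin (unit_top src rng) W1" "gsrc src ` W1 \<subseteq> S"
    and W2: "invariant src rng W2"
    and eq: "vertex_signature src rng S W1 = vertex_signature src rng S W2"
  shows "W1 \<subseteq> W2"
proof
  fix x assume "x \<in> W1"
  then obtain mu t where mu: "mu \<in> finpaths src rng" and t: "t \<in> bpaths src rng"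
    and r: "grng rng mu = gsrc src t" and x: "x = gcat mu t"
    and tail: "t = Fin (gsrc src t) [] \<or> cyl src rng (Fin (gsrc src t) []) \<subseteq> W1"
    using invariant_open_tail[OF W1(1,2)] by metis
  have "t \<in> W1" using invariant_gcat_iff[OF W1(1) mu t r] x \<open>x \<in> W1\<close> by simp
  then have "gsrc src t \<in> S" using W1(3) by blast
  have sig: "{v \<in> S. cyl src rng (Fin v []) \<subseteq> W1} = {v \<in> S. cyl src rng (Fin v []) \<subseteq> W2}"
    "{v \<in> S. Fin v [] \<in> W1} = {v \<in> S. Fin v [] \<in> W2}"
    using eq by (simp_all add: vertex_signature_def)
  from tail have "t \<in> W2"
  proof
    assume "t = Fin (gsrc src t) []"
    then show ?thesis using sig(2) \<open>t \<in> W1\<close> \<open>gsrc src t \<in> S\<close> by (metis (mono_tags, lifting) mem_Collect_eq)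
  next
    assume "cyl src rng (Fin (gsrc src t) []) \<subseteq> W1"
    then have "cyl src rng (Fin (gsrc src t) []) \<subseteq> W2" using sig(1) \<open>gsrc src t \<in> S\<close> by blast
    then show ?thesis using t by (auto simp: cyl_vertex)
  qed
  then show "x \<in> W2" using invariant_gcat_iff[OF W2 mu t r] x by simp
qed

lemma finite_compact_open_invariant_subsets:
  assumes "compactin (unit_top src rng) U"
  shows "finite {W. W \<subseteq> U \<and> compact_open_invariant src rng W}"
    (is "finite ?B")
proof -
  let ?S = "gsrc src ` U"
  have "W1 = W2" if "W1 \<in> ?B" "W2 \<in> ?B"
    and "vertex_signature src rng ?S W1 = vertex_signature src rng ?S W2" for W1 W2
    using that subset_if_vertex_signature_eq[of src rng W1 ?S W2]
      subset_if_vertex_signature_eq[of src rng W2 ?S W1]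
    by (auto simp: compact_open_invariant_def)
  then have "inj_on (vertex_signature src rng ?S) ?B" by (rule inj_onI)
  moreover have "vertex_signature src rng ?S ` ?B \<subseteq> Pow ?S \<times> Pow ?S"
    by (auto simp: vertex_signature_def)
  then have "finite (vertex_signature src rng ?S ` ?B)"
    using finite_gsrc_compactin[OF assms] by (meson finite_Pow_iff finite_SigmaI finite_subset)
  ultimately show ?thesis by (rule finite_imageD[rotated])
qed

theorem lemma3p9:
  fixes src rng :: "'e \<Rightarrow> 'v" and U :: "('v, 'e) gpath set"
  assumes "compact_open_invariant src rng U"
  defines "M \<equiv> {V. minimal_coi src rng V \<and> V \<subseteq> U}"
  shows "finite M \<and> pairwise disjnt M \<and> U = \<Union>M"
proof -
  let ?B = "{W. W \<subseteq> U \<and> compact_open_invariant src rng W}"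
  have fin: "finite ?B"
    using assms(1) finite_compact_open_invariant_subsets unfolding compact_open_invariant_def by blast
  have M: "M = {V \<in> ?B. V \<noteq> {} \<and> (\<forall>W\<in>?B. W \<noteq> {} \<and> W \<subseteq> V \<longrightarrow> W = V)}"
    unfolding M_def minimal_coi_def by blast
  have "pairwise disjnt M \<and> U = \<Union>M"
    unfolding M using compact_open_invariant_Diff assms(1)
    by (intro finite_Diff_closed_atoms_partition[OF fin]) auto
  moreover have "finite M" using fin unfolding M by (rule finite_subset[rotated]) blast
  ultimately show ?thesis by blast
qed

end
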